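(* Let $d_1,\ldots,d_n\in\mathbb C[t,u]$ be the singular factors of $\phi$ and let $\psi:\mathbb P^1\to\mathbb P^1$, $(t':u')\mapsto(\alpha t'+\beta u':\delta t'+\gamma u')$ with $\alpha\gamma-\beta\delta\ne0$, be a linear change of coordinates, with associated graded ring isomorphism $\psi^\sharp:\mathbb C[t,u]\to\mathbb C[t',u']$, $t\mapsto(\gamma t'-\beta u')/(\alpha\gamma-\beta\delta)$, $u\mapsto(\delta t'-\alpha u')/(\alpha\gamma-\beta\delta)$. Then $\psi^\sharp(d_1),\ldots,\psi^\sharp(d_n)$ are the singular factors of the parameterization $\phi\circ\psi$ of $\mathcal C$.
   Context: Let $a,b,c\in\mathbb C[s,v]$ be homogeneous of the same degree $n\ge3$, $\gcd(a,b,c)=1$, with $\phi=(a:b:c):\mathbb P^1\to\mathbb P^2$ birational onto its image $\mathcal C$. A $\mu$-basis is a homogeneous basis $p,q$ (degrees $\mu\le n-\mu$) of the free syzygy module of $(a,b,c)$; $p_\phi(s,v;t,u)=\sum_ip_i(s,v)\,\phi_i(t,u)$, $q_\phi(s,v;t,u)=\sum_iq_i(s,v)\,\phi_i(t,u)$ where $(\phi_1,\phi_2,\phi_3)=(a,b,c)$. $S_{p_\phi,q_\phi}(t,u)$ is their $n\times n$ Sylvester matrix with respect to $(s,v)$. The singular factors of $\phi$ are homogeneous $d_1,\ldots,d_n\in\mathbb C[t,u]$ such that for each $i$, $d_n^{n-i+1}\cdots d_{i+1}^2d_i$ equals (up to nonzero constant) the gcd of the $(n+1-i)$-minors of $S_{p_\phi,q_\phi}(t,u)$.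 *)

theory Defs
  imports "HOL-Computational_Algebra.Polynomial" "Jordan_Normal_Form.Determinant"
    "Jordan_Normal_Form.DL_Submatrix"
begin

text \<open>Bivariate polynomials in C[x,y] are represented as complex poly poly:
  P = sum_j (coeff P j) * y^j with coeff P j in C[x].  The first variable of the
  paper (s resp. t) is the inner variable x, the second (v resp. u) is the outer y.\<close>

type_synonym bpoly = "complex poly poly"

definition coeff2 :: "bpoly \<Rightarrow> nat \<Rightarrow> nat \<Rightarrow> complex" where
  "coeff2 P i j = coeff (coeff P j) i"

definition const2 :: "complex \<Rightarrow> bpoly" where
  "const2 z = [:[:z:]:]"

definition varX :: bpoly where "varX = [:[:0, 1:]:]"
definition varY :: bpoly where "varY = [:0, 1:]"

definition homog :: "nat \<Rightarrow> bpoly \<Rightarrow> bool" where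
  "homog n P \<longleftrightarrow> (\<forall>i j. coeff2 P i j \<noteq> 0 \<longrightarrow> i + j = n)"

definition subst2 :: "bpoly \<Rightarrow> bpoly \<Rightarrow> bpoly \<Rightarrow> bpoly" where
  "subst2 P L1 L2 = (\<Sum>j\<le>degree P. \<Sum>i\<le>degree (coeff P j).
       const2 (coeff2 P i j) * L1 ^ i * L2 ^ j)"

text \<open>The graded ring isomorphism attached to psi(t:u) = (alpha t + beta u : delta t + gamma u),
  i.e. F(t,u) maps to F(alpha t' + beta u', delta t' + gamma u').\<close>
definition psi_sharp :: "complex \<Rightarrow> complex \<Rightarrow> complex \<Rightarrow> complex \<Rightarrow> bpoly \<Rightarrow> bpoly" where
  "psi_sharp \<alpha> \<beta> \<delta> \<gamma> F =
     subst2 F (const2 \<alpha> * varX + const2 \<beta> * varY) (const2 \<delta> * varX + const2 \<gamma> * varY)"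

definition eval2 :: "bpoly \<Rightarrow> complex \<Rightarrow> complex \<Rightarrow> complex" where
  "eval2 P x y = poly (poly P [:y:]) x"

type_synonym triple = "bpoly \<times> bpoly \<times> bpoly"

definition coprime3 :: "bpoly \<Rightarrow> bpoly \<Rightarrow> bpoly \<Rightarrow> bool" where
  "coprime3 a b c \<longleftrightarrow> (\<forall>g. g dvd a \<and> g dvd b \<and> g dvd c \<longrightarrow> is_unit g)"

text \<open>Projective equality of nonzero vectors in C^2 resp. C^3.\<close>
definition prop2 :: "complex \<times> complex \<Rightarrow> complex \<times> complex \<Rightarrow> bool" where
  "prop2 x y \<longleftrightarrow> fst x * snd y = snd x * fst y"

definition prop3 :: "complex \<times> complex \<times> complex \<Rightarrow> complex \<times> complex \<times> complex \<Rightarrow> bool" where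
  "prop3 x y \<longleftrightarrow> (case x of (x1,x2,x3) \<Rightarrow> case y of (y1,y2,y3) \<Rightarrow>
       x1 * y2 = x2 * y1 \<and> x1 * y3 = x3 * y1 \<and> x2 * y3 = x3 * y2)"

definition param_map :: "triple \<Rightarrow> complex \<times> complex \<Rightarrow> complex \<times> complex \<times> complex" where
  "param_map \<phi> x = (case \<phi> of (a,b,c) \<Rightarrow>
      (eval2 a (fst x) (snd x), eval2 b (fst x) (snd x), eval2 c (fst x) (snd x)))"

text \<open>phi : P^1 -> P^2 is birational onto its image (generically injective): outside a
  finite set F of points of P^1, every point is the only preimage of its image.\<close>
definition birational_onto_image :: "triple \<Rightarrow> bool" where
  "birational_onto_image \<phi> \<longleftrightarrow>
     (\<exists>F :: (complex \<times> complex) set. finite F \<and>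
        (\<forall>x y. x \<noteq> (0,0) \<longrightarrow> y \<noteq> (0,0) \<longrightarrow> (\<forall>f\<in>F. \<not> prop2 x f) \<longrightarrow>
               prop3 (param_map \<phi> x) (param_map \<phi> y) \<longrightarrow> prop2 x y))"

definition is_syz :: "triple \<Rightarrow> triple \<Rightarrow> bool" where
  "is_syz \<phi> h \<longleftrightarrow> (case \<phi> of (a,b,c) \<Rightarrow> case h of (h1,h2,h3) \<Rightarrow> h1 * a + h2 * b + h3 * c = 0)"

definition lincomb :: "bpoly \<Rightarrow> triple \<Rightarrow> bpoly \<Rightarrow> triple \<Rightarrow> triple" where
  "lincomb r p w q = (case p of (p1,p2,p3) \<Rightarrow> case q of (q1,q2,q3) \<Rightarrow>
      (r * p1 + w * q1, r * p2 + w * q2, r * p3 + w * q3))"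

definition homog3 :: "nat \<Rightarrow> triple \<Rightarrow> bool" where
  "homog3 d h \<longleftrightarrow> (case h of (h1,h2,h3) \<Rightarrow> homog d h1 \<and> homog d h2 \<and> homog d h3)"

definition mu_basis :: "nat \<Rightarrow> triple \<Rightarrow> nat \<Rightarrow> triple \<Rightarrow> triple \<Rightarrow> bool" where
  "mu_basis n \<phi> \<mu> p q \<longleftrightarrow> \<mu> \<le> n - \<mu> \<and> homog3 \<mu> p \<and> homog3 (n - \<mu>) q \<and>
     is_syz \<phi> p \<and> is_syz \<phi> q \<and>
     (\<forall>h. is_syz \<phi> h \<longrightarrow> (\<exists>!rw. h = lincomb (fst rw) p (snd rw) q))"

text \<open>Coefficient of s^k v^(m-k) in p_phi(s,v;t,u) = sum_i p_i(s,v) phi_i(t,u), where p is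
  homogeneous of degree m in (s,v); it is an element of C[t,u].\<close>
definition pphi_coeff :: "nat \<Rightarrow> triple \<Rightarrow> triple \<Rightarrow> nat \<Rightarrow> bpoly" where
  "pphi_coeff m p \<phi> k = (case p of (p1,p2,p3) \<Rightarrow> case \<phi> of (a,b,c) \<Rightarrow>
      const2 (coeff2 p1 k (m - k)) * a + const2 (coeff2 p2 k (m - k)) * b
        + const2 (coeff2 p3 k (m - k)) * c)"

text \<open>Sylvester matrix of two binary forms f (degree m, coefficient of s^k v^(m-k) is f k)
  and g (degree l) with respect to (s,v): an (m+l) x (m+l) matrix; row i < l holds
  s^i v^(l-1-i) f, row l+i (i < m) holds s^i v^(m-1-i) g, in the monomial basis
  s^j v^(m+l-1-j), j < m+l.\<close>
definition sylv_forms :: "nat \<Rightarrow> (nat \<Rightarrow> 'a::zero) \<Rightarrow> nat \<Rightarrow> (nat \<Rightarrow> 'a) \<Rightarrow> 'a mat" where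
  "sylv_forms m f l g = mat (m + l) (m + l) (\<lambda>(i, j).
      if i < l then (if i \<le> j \<and> j - i \<le> m then f (j - i) else 0)
      else (if i - l \<le> j \<and> j - (i - l) \<le> l then g (j - (i - l)) else 0))"

definition minors :: "nat \<Rightarrow> 'a::comm_ring_1 mat \<Rightarrow> 'a set" where
  "minors k A = {det (submatrix A I J) | I J.
      I \<subseteq> {..<dim_row A} \<and> J \<subseteq> {..<dim_col A} \<and> card I = k \<and> card J = k}"

definition is_gcd_of :: "'a::comm_semiring_1 \<Rightarrow> 'a set \<Rightarrow> bool" where
  "is_gcd_of G S \<longleftrightarrow> (\<forall>x\<in>S. G dvd x) \<and> (\<forall>g. (\<forall>x\<in>S. g dvd x) \<longrightarrow> g dvd G)"

definition singular_factors :: "nat \<Rightarrow> triple \<Rightarrow> (nat \<Rightarrow> bpoly) \<Rightarrow> bool" where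
  "singular_factors n \<phi> d \<longleftrightarrow>
     (\<exists>\<mu> p q. mu_basis n \<phi> \<mu> p q \<and>
        (\<forall>i\<in>{1..n}. \<exists>k. homog k (d i)) \<and>
        (\<forall>i\<in>{1..n}. is_gcd_of (\<Prod>j\<in>{i..n}. d j ^ (j - i + 1))
           (minors (n + 1 - i)
              (sylv_forms \<mu> (pphi_coeff \<mu> p \<phi>) (n - \<mu>) (pphi_coeff (n - \<mu>) q \<phi>)))))"

end

theory Submission
  imports Defs
begin

(*
  The substitution psi_sharp is a degree-preserving ring automorphism of C[x,y], its inverse
  being the substitution with the inverse matrix.  Consequently:
  (1) psi_sharp maps a mu-basis p, q of phi to a mu-basis of the transformed parametrization;
  (2) on forms of degree k, psi_sharp acts on coefficient vectors (monomial basis) by a constant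
      matrix, so the Sylvester matrix S' of the transformed mu-basis is A * psi_sharp(S) * B for
      constant matrices A, B, and symmetrically S = A' * psi_sharp^-1(S') * B';
  (3) a common divisor of the k-minors of M divides the k-minors of A * M * B, and a ring
      homomorphism maps the k-minors of M onto those of its image; hence the gcds of the minors
      of S' are the images of the gcds of the minors of S.
*)

section \<open>Evaluation of bivariate polynomials\<close>

text \<open>Over the infinite field C a bivariate polynomial is determined by its values, so
  identities between polynomials can be proved pointwise through eval2.\<close>

lemma eval2_add [simp]: "eval2 (P + Q) x y = eval2 P x y + eval2 Q x y"
  and eval2_diff [simp]: "eval2 (P - Q) x y = eval2 P x y - eval2 Q x y"
  and eval2_mult [simp]: "eval2 (P * Q) x y = eval2 P x y * eval2 Q x y"
  and eval2_0 [simp]: "eval2 0 x y = 0"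
  and eval2_1 [simp]: "eval2 1 x y = 1"
  and eval2_const2 [simp]: "eval2 (const2 z) x y = z"
  and eval2_varX [simp]: "eval2 varX x y = x"
  and eval2_varY [simp]: "eval2 varY x y = y"
  by (simp_all add: eval2_def const2_def varX_def varY_def)

lemma eval2_sum [simp]: "eval2 (sum f A) x y = (\<Sum>a\<in>A. eval2 (f a) x y)"
  by (induct A rule: infinite_finite_induct) auto

lemma eval2_power [simp]: "eval2 (P ^ k) x y = eval2 P x y ^ k"
  by (induct k) auto

text \<open>The value of P at (x, y) as the finite double sum over its coefficients; this is the
  shape in which subst2 is defined.\<close>
lemma eval2_expand:
  "eval2 P x y = (\<Sum>j\<le>degree P. \<Sum>i\<le>degree (coeff P j). coeff2 P i j * x ^ i * y ^ j)"
proof -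
  have "poly P [:y:] = (\<Sum>j\<le>degree P. smult (y ^ j) (coeff P j))"
    unfolding poly_altdef by (rule sum.cong) (auto simp: poly_const_pow mult.commute)
  hence "eval2 P x y = (\<Sum>j\<le>degree P. y ^ j * poly (coeff P j) x)"
    by (simp add: eval2_def poly_sum)
  also have "\<dots> = (\<Sum>j\<le>degree P. \<Sum>i\<le>degree (coeff P j). coeff2 P i j * x ^ i * y ^ j)"
    by (rule sum.cong) (simp_all add: poly_altdef sum_distrib_left coeff2_def mult_ac)
  finally show ?thesis .
qed

text \<open>A polynomial vanishing everywhere is zero: each specialisation P(-, y) vanishes, so P,
  viewed as a polynomial over C[x], has all the infinitely many constants as roots.\<close>
lemma eval2_eq_0_imp:
  assumes "\<And>x y. eval2 P x y = 0"
  shows "P = 0"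
proof (rule ccontr)
  assume "P \<noteq> 0"
  have "poly P [:y:] = 0" for y
    using assms by (simp add: eval2_def poly_all_0_iff_0[symmetric])
  hence "range (\<lambda>y. [:y:]) \<subseteq> {r. poly P r = 0}" by auto
  moreover have "infinite (range (\<lambda>y::complex. [:y:]))"
  proof
    assume "finite (range (\<lambda>y::complex. [:y:]))"
    hence "finite (UNIV :: complex set)" by (rule finite_imageD) (simp add: inj_on_def)
    thus False by (simp add: infinite_UNIV_char_0)
  qed
  ultimately show False
    using poly_roots_finite[OF \<open>P \<noteq> 0\<close>] finite_subset by blast
qed

lemma eval2_inj:
  assumes "\<And>x y. eval2 P x y = eval2 Q x y"
  shows "P = Q"
  using eval2_eq_0_imp[of "P - Q"] assms by simp

section \<open>The substitution psi_sharp\<close>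

lemma eval2_psi_sharp:
  "eval2 (psi_sharp a b d g P) x y = eval2 P (a * x + b * y) (d * x + g * y)"
  by (simp add: psi_sharp_def subst2_def eval2_expand[of P])

interpretation psi_sharp: comm_ring_hom "psi_sharp a b d g"
proof
  show "psi_sharp a b d g (P + Q) = psi_sharp a b d g P + psi_sharp a b d g Q"
    and "psi_sharp a b d g (P * Q) = psi_sharp a b d g P * psi_sharp a b d g Q"
    and "psi_sharp a b d g 1 = 1" and "psi_sharp a b d g 0 = 0" for P Q
    by (rule eval2_inj, simp add: eval2_psi_sharp)+
qed

lemma psi_sharp_const2 [simp]: "psi_sharp a b d g (const2 z) = const2 z"
  by (rule eval2_inj) (simp add: eval2_psi_sharp)

lemma psi_sharp_varX: "psi_sharp a b d g varX = const2 a * varX + const2 b * varY"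
  and psi_sharp_varY: "psi_sharp a b d g varY = const2 d * varX + const2 g * varY"
  by (rule eval2_inj, simp add: eval2_psi_sharp)+

lemma psi_sharp_psi_sharp:
  "psi_sharp a b d g (psi_sharp a' b' d' g' P) =
     psi_sharp (a' * a + b' * d) (a' * b + b' * g) (d' * a + g' * d) (d' * b + g' * g) P"
  by (rule eval2_inj) (simp add: eval2_psi_sharp algebra_simps)

lemma psi_sharp_inverse:
  assumes "a' * a + b' * d = 1" "a' * b + b' * g = 0" "d' * a + g' * d = 0" "d' * b + g' * g = 1"
  shows "psi_sharp a b d g (psi_sharp a' b' d' g' P) = P"
  unfolding psi_sharp_psi_sharp assms by (rule eval2_inj) (simp add: eval2_psi_sharp)

lemma psi_sharp_invertible:
  fixes a b d g :: complex
  defines "D \<equiv> a * g - b * d"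
  assumes "D \<noteq> 0"
  shows "psi_sharp (g / D) (- b / D) (- d / D) (a / D) (psi_sharp a b d g P) = P"
    and "psi_sharp a b d g (psi_sharp (g / D) (- b / D) (- d / D) (a / D) P) = P"
proof -
  have inv: "(a * g - b * d) * inverse D = 1"
    using assms by simp
  show "psi_sharp (g / D) (- b / D) (- d / D) (a / D) (psi_sharp a b d g P) = P"
    and "psi_sharp a b d g (psi_sharp (g / D) (- b / D) (- d / D) (a / D) P) = P"
    by (rule psi_sharp_inverse; use inv in \<open>simp add: divide_inverse algebra_simps\<close>)+
qed

section \<open>Binary forms\<close>

definition hcoeff :: "nat \<Rightarrow> bpoly \<Rightarrow> nat \<Rightarrow> complex" where
  "hcoeff m P k = coeff2 P k (m - k)"

definition hmonom :: "nat \<Rightarrow> nat \<Rightarrow> bpoly" where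
  "hmonom m k = monom (monom 1 k) (m - k)"

lemma bpoly_eqI: "(\<And>i j. coeff2 P i j = coeff2 Q i j) \<Longrightarrow> P = Q"
  unfolding coeff2_def by (intro poly_eqI) auto

lemma coeff2_add [simp]: "coeff2 (P + Q) i j = coeff2 P i j + coeff2 Q i j"
  and coeff2_0 [simp]: "coeff2 0 i j = 0"
  and coeff2_monom [simp]: "coeff2 (monom (monom c k) l) i j = (if i = k \<and> j = l then c else 0)"
  and coeff2_const2_mult [simp]: "coeff2 (const2 c * P) i j = c * coeff2 P i j"
  by (simp_all add: coeff2_def const2_def)

lemma coeff2_sum [simp]: "coeff2 (sum f A) i j = (\<Sum>a\<in>A. coeff2 (f a) i j)"
  by (induct A rule: infinite_finite_induct) auto

lemma hcoeff_sum [simp]: "hcoeff m (sum f A) k = (\<Sum>a\<in>A. hcoeff m (f a) k)"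
  and hcoeff_const2_mult [simp]: "hcoeff m (const2 c * P) k = c * hcoeff m P k"
  by (simp_all add: hcoeff_def)

interpretation const2: comm_ring_hom const2
  by unfold_locales (simp_all add: const2_def one_pCons)

lemma const2_mult_monom: "const2 c * monom (monom c' k) l = monom (monom (c * c') k) l"
  by (rule bpoly_eqI) simp

lemma monom_mult_monom:
  "monom (monom c k) l * monom (monom c' k') l' = monom (monom (c * c') (k + k')) (l + l')"
  by (simp add: mult_monom)

lemma varX_monom: "varX = monom (monom 1 1) 0"
  and varY_monom: "varY = monom (monom 1 0) 1"
  by (simp_all add: varX_def varY_def monom_0 monom_Suc one_pCons)

lemma monom_as_product: "monom (monom c k) l = const2 c * varX ^ k * varY ^ l"
proof -
  have "varX ^ k = monom (monom 1 k) 0"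
    by (induct k) (simp_all add: varX_monom monom_mult_monom one_pCons monom_0 mult_monom)
  moreover have "varY ^ l = monom (monom 1 0) l"
    by (induct l) (simp_all add: varY_monom monom_mult_monom one_pCons monom_0 mult_monom)
  ultimately show ?thesis by (simp only: monom_mult_monom const2_mult_monom) simp
qed

lemma homog_0 [simp]: "homog m 0"
  and homog_monom: "k + l = m \<Longrightarrow> homog m (monom (monom c k) l)"
  and homog_const2_mult: "homog m P \<Longrightarrow> homog m (const2 c * P)"
  by (simp_all add: homog_def)

lemma homog_add: "homog m P \<Longrightarrow> homog m Q \<Longrightarrow> homog m (P + Q)"
  unfolding homog_def by (metis add.left_neutral coeff2_add)

lemma homog_sum: "(\<And>a. a \<in> A \<Longrightarrow> homog m (f a)) \<Longrightarrow> homog m (sum f A)"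
  by (induct A rule: infinite_finite_induct) (auto intro: homog_add)

lemma homog_hmonom: "k \<le> m \<Longrightarrow> homog m (hmonom m k)"
  unfolding hmonom_def by (rule homog_monom) simp

lemma homog_decomp:
  assumes "homog m P"
  shows "P = (\<Sum>k\<le>m. const2 (hcoeff m P k) * hmonom m k)"
proof (rule bpoly_eqI)
  fix i j
  have "(\<Sum>k\<le>m. coeff2 (const2 (hcoeff m P k) * hmonom m k) i j)
      = (\<Sum>k\<le>m. if k = i then (if j = m - i then hcoeff m P i else 0) else 0)"
    by (rule sum.cong) (auto simp: hmonom_def)
  also have "\<dots> = (if i \<le> m \<and> j = m - i then hcoeff m P i else 0)"
    by (simp add: sum.delta)
  also have "\<dots> = coeff2 P i j"
    using assms unfolding homog_def hcoeff_def by (metis add_diff_cancel_left' le_add1)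
  finally show "coeff2 P i j = coeff2 (\<Sum>k\<le>m. const2 (hcoeff m P k) * hmonom m k) i j"
    by simp
qed

lemma homog_mult:
  assumes "homog m P" "homog m' Q"
  shows "homog (m + m') (P * Q)"
proof -
  have "P * Q = (\<Sum>k\<le>m. \<Sum>k'\<le>m'.
      monom (monom (hcoeff m P k * hcoeff m' Q k') (k + k')) (m - k + (m' - k')))"
    by (subst homog_decomp[OF assms(1)], subst homog_decomp[OF assms(2)])
       (simp add: sum_product hmonom_def const2_mult_monom monom_mult_monom mult_ac)
  thus ?thesis by (auto intro!: homog_sum homog_monom)
qed

lemma homog_1: "homog 0 1"
  using homog_monom[of 0 0 0 1] by (simp add: one_pCons monom_0)

lemma homog_power: "homog m P \<Longrightarrow> homog (m * k) (P ^ k)"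
  by (induct k) (simp_all add: homog_1 homog_mult)

lemma homog_psi_sharp:
  assumes "homog m P"
  shows "homog m (psi_sharp a b d g P)"
proof -
  have linear: "homog 1 (const2 a' * varX + const2 b' * varY)" for a' b'
    unfolding varX_monom varY_monom const2_mult_monom by (intro homog_add homog_monom) simp_all
  have monomial: "homog (k + l) (psi_sharp a b d g (monom (monom c k) l))" for c k l
  proof -
    have "homog (1 * k + 1 * l)
        ((const2 a * varX + const2 b * varY) ^ k * (const2 d * varX + const2 g * varY) ^ l)"
      by (intro homog_mult homog_power linear)
    thus ?thesis
      by (simp add: monom_as_product psi_sharp.hom_mult psi_sharp.hom_power psi_sharp_varX
          psi_sharp_varY mult.assoc homog_const2_mult)
  qed
  hence "homog m (\<Sum>k\<le>m. const2 (hcoeff m P k) * psi_sharp a b d g (hmonom m k))"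
    by (intro homog_sum homog_const2_mult) (metis monomial hmonom_def atMost_iff le_add_diff_inverse)
  thus ?thesis by (subst homog_decomp[OF assms]) (simp add: psi_sharp.hom_sum psi_sharp.hom_mult)
qed

lemma hcoeff_psi_sharp:
  assumes "homog m P"
  shows "hcoeff m (psi_sharp a b d g P) j =
    (\<Sum>k\<le>m. hcoeff m P k * hcoeff m (psi_sharp a b d g (hmonom m k)) j)"
proof -
  have "psi_sharp a b d g P = (\<Sum>k\<le>m. const2 (hcoeff m P k) * psi_sharp a b d g (hmonom m k))"
    by (subst homog_decomp[OF assms]) (simp add: psi_sharp.hom_sum psi_sharp.hom_mult)
  thus ?thesis by simp
qed

lemma hcoeff_hmonom_mult:
  assumes "r \<le> k" "j \<le> k + m"
  shows "hcoeff (k + m) (hmonom k r * P) j = (if r \<le> j \<and> j - r \<le> m then hcoeff m P (j - r) else 0)"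
  using assms
  by (auto simp: hcoeff_def hmonom_def coeff2_def coeff_monom_mult
      intro!: arg_cong[where f="coeff2 P (j - r)", unfolded coeff2_def])

lemma hmonom_as_image:
  assumes inv: "\<And>X. psi_sharp a b d g (psi_sharp a' b' d' g' X) = X" and "r \<le> k"
  shows "hmonom k r = psi_sharp a b d g
    (\<Sum>r'\<le>k. const2 (hcoeff k (psi_sharp a' b' d' g' (hmonom k r)) r') * hmonom k r')"
proof -
  have "homog k (psi_sharp a' b' d' g' (hmonom k r))"
    using assms(2) by (intro homog_psi_sharp homog_hmonom)
  from homog_decomp[OF this] inv[of "hmonom k r"] show ?thesis by simp
qed

section \<open>Sylvester matrices under a change of coordinates\<close>

definition sylv_row :: "nat \<Rightarrow> bpoly \<Rightarrow> nat \<Rightarrow> bpoly \<Rightarrow> nat \<Rightarrow> bpoly" where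
  "sylv_row m P l Q r = (if r < l then hmonom (l - 1) r * P else hmonom (m - 1) (r - l) * Q)"

lemma homog_sylv_row:
  assumes "homog m P" "homog l Q" "r < m + l"
  shows "homog (m + l - 1) (sylv_row m P l Q r)"
  using homog_mult[OF homog_hmonom assms(1), of r "l - 1"]
    homog_mult[OF homog_hmonom assms(2), of "r - l" "m - 1"] assms(3)
  by (auto simp: sylv_row_def ac_simps)

lemma sylv_forms_sylv_row:
  assumes "r < m + l" "j < m + l"
  shows "sylv_forms m (hcoeff m P) l (hcoeff l Q) $$ (r, j) = hcoeff (m + l - 1) (sylv_row m P l Q r) j"
proof (cases "r < l")
  case True
  have "hcoeff (l - 1 + m) (hmonom (l - 1) r * P) j
      = (if r \<le> j \<and> j - r \<le> m then hcoeff m P (j - r) else 0)"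
    by (rule hcoeff_hmonom_mult) (use assms True in auto)
  moreover have "l - 1 + m = m + l - 1" using True by simp
  ultimately show ?thesis using assms True by (simp add: sylv_forms_def sylv_row_def)
next
  case False
  have "hcoeff (m - 1 + l) (hmonom (m - 1) (r - l) * Q) j
      = (if r - l \<le> j \<and> j - (r - l) \<le> l then hcoeff l Q (j - (r - l)) else 0)"
    by (rule hcoeff_hmonom_mult) (use assms False in auto)
  moreover have "m - 1 + l = m + l - 1" using False assms(1) by simp
  ultimately show ?thesis using assms False by (simp add: sylv_forms_def sylv_row_def)
qed

text \<open>The constant matrices relating the Sylvester matrices before and after the substitution:
  row_change is block diagonal, made of the matrices of psi_sharp on forms of degrees l-1 and
  m-1, and col_change is the matrix of psi_sharp on forms of degree N-1.\<close>
definition row_change :: "complex \<Rightarrow> complex \<Rightarrow> complex \<Rightarrow> complex \<Rightarrow> nat \<Rightarrow> nat \<Rightarrow> complex mat" where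
  "row_change a b d g m l = mat (m + l) (m + l) (\<lambda>(r, r').
     if r < l then (if r' < l then hcoeff (l - 1) (psi_sharp a b d g (hmonom (l - 1) r)) r' else 0)
     else (if l \<le> r' then hcoeff (m - 1) (psi_sharp a b d g (hmonom (m - 1) (r - l))) (r' - l)
           else 0))"

definition col_change :: "complex \<Rightarrow> complex \<Rightarrow> complex \<Rightarrow> complex \<Rightarrow> nat \<Rightarrow> complex mat" where
  "col_change a b d g N = mat N N (\<lambda>(j', j). hcoeff (N - 1) (psi_sharp a b d g (hmonom (N - 1) j')) j)"

lemma row_change_dim [simp]:
    "dim_row (row_change a b d g m l) = m + l" "dim_col (row_change a b d g m l) = m + l"
  and col_change_dim [simp]: "dim_row (col_change a b d g N) = N" "dim_col (col_change a b d g N) = N"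
  and sylv_forms_dim [simp]: "dim_row (sylv_forms m f l h) = m + l" "dim_col (sylv_forms m f l h) = m + l"
  by (simp_all add: row_change_def col_change_def sylv_forms_def)

lemma row_change_carrier: "row_change a b d g m l \<in> carrier_mat (m + l) (m + l)"
  and col_change_carrier: "col_change a b d g N \<in> carrier_mat N N"
  and sylv_forms_carrier: "sylv_forms m f l h \<in> carrier_mat (m + l) (m + l)"
  by (rule carrier_matI; simp)+

lemma sylv_row_psi_sharp:
  assumes inv: "\<And>X. psi_sharp a b d g (psi_sharp a' b' d' g' X) = X" and r: "r < m + l"
  shows "sylv_row m (psi_sharp a b d g P) l (psi_sharp a b d g Q) r = psi_sharp a b d g
    (\<Sum>r'<m + l. const2 (row_change a' b' d' g' m l $$ (r, r')) * sylv_row m P l Q r')"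
proof (cases "r < l")
  case True
  define k where "k = l - 1"
  have lk: "{..<l} = {..k}" using True by (auto simp: k_def)
  have sum_eq: "(\<Sum>r'<m + l. const2 (row_change a' b' d' g' m l $$ (r, r')) * sylv_row m P l Q r')
      = (\<Sum>r'\<le>k. const2 (hcoeff k (psi_sharp a' b' d' g' (hmonom k r)) r') * (hmonom k r' * P))"
    unfolding lk[symmetric] using r
    by (intro sum.mono_neutral_cong_right) (auto simp: row_change_def sylv_row_def True k_def)
  have "sylv_row m (psi_sharp a b d g P) l (psi_sharp a b d g Q) r = hmonom k r * psi_sharp a b d g P"
    using True by (simp add: sylv_row_def k_def)
  also have "hmonom k r = psi_sharp a b d g
      (\<Sum>r'\<le>k. const2 (hcoeff k (psi_sharp a' b' d' g' (hmonom k r)) r') * hmonom k r')"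
    using True by (intro hmonom_as_image[OF inv]) (simp add: k_def)
  also have "\<dots> * psi_sharp a b d g P = psi_sharp a b d g
      (\<Sum>r'\<le>k. const2 (hcoeff k (psi_sharp a' b' d' g' (hmonom k r)) r') * (hmonom k r' * P))"
    by (simp only: psi_sharp.hom_mult[symmetric] sum_distrib_right mult.assoc)
  finally show ?thesis unfolding sum_eq .
next
  case False
  define k i where "k = m - 1" and "i = r - l"
  have mk: "{..<m} = {..k}" and ik: "i \<le> k" using False r by (auto simp: k_def i_def)
  have "(\<Sum>r'<m + l. const2 (row_change a' b' d' g' m l $$ (r, r')) * sylv_row m P l Q r')
      = (\<Sum>r'\<in>{l..<m + l}. const2 (row_change a' b' d' g' m l $$ (r, r')) * sylv_row m P l Q r')"
    using r by (intro sum.mono_neutral_right) (auto simp: row_change_def False)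
  also have "\<dots> = (\<Sum>i'<m. const2 (row_change a' b' d' g' m l $$ (r, i' + l)) * sylv_row m P l Q (i' + l))"
    using sum.shift_bounds_nat_ivl[of _ 0 l m] by (simp add: atLeast0LessThan)
  also have "\<dots> = (\<Sum>i'\<le>k. const2 (hcoeff k (psi_sharp a' b' d' g' (hmonom k i)) i') * (hmonom k i' * Q))"
    unfolding mk using r False by (intro sum.cong) (auto simp: row_change_def sylv_row_def k_def i_def)
  finally have sum_eq: "(\<Sum>r'<m + l. const2 (row_change a' b' d' g' m l $$ (r, r')) * sylv_row m P l Q r')
      = (\<Sum>i'\<le>k. const2 (hcoeff k (psi_sharp a' b' d' g' (hmonom k i)) i') * (hmonom k i' * Q))" .
  have "sylv_row m (psi_sharp a b d g P) l (psi_sharp a b d g Q) r = hmonom k i * psi_sharp a b d g Q"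
    using False by (simp add: sylv_row_def k_def i_def)
  also have "hmonom k i = psi_sharp a b d g
      (\<Sum>i'\<le>k. const2 (hcoeff k (psi_sharp a' b' d' g' (hmonom k i)) i') * hmonom k i')"
    by (rule hmonom_as_image[OF inv ik])
  also have "\<dots> * psi_sharp a b d g Q = psi_sharp a b d g
      (\<Sum>i'\<le>k. const2 (hcoeff k (psi_sharp a' b' d' g' (hmonom k i)) i') * (hmonom k i' * Q))"
    by (simp only: psi_sharp.hom_mult[symmetric] sum_distrib_right mult.assoc)
  finally show ?thesis unfolding sum_eq .
qed

lemma index_mult_mat3:
  fixes A M B :: "'a::comm_semiring_0 mat"
  assumes "A \<in> carrier_mat p n" "M \<in> carrier_mat n q" "B \<in> carrier_mat q c" "i < p" "j < c"
  shows "(A * M * B) $$ (i, j) = (\<Sum>r<n. \<Sum>s<q. A $$ (i, r) * M $$ (r, s) * B $$ (s, j))"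
  using assms by (simp add: scalar_prod_def atLeast0LessThan sum_distrib_left mult.assoc)

lemma sylv_forms_psi_sharp:
  assumes inv: "\<And>X. psi_sharp a b d g (psi_sharp a' b' d' g' X) = X"
    and P: "homog m P" and Q: "homog l Q"
  shows "sylv_forms m (hcoeff m (psi_sharp a b d g P)) l (hcoeff l (psi_sharp a b d g Q)) =
    row_change a' b' d' g' m l * sylv_forms m (hcoeff m P) l (hcoeff l Q) * col_change a b d g (m + l)"
  (is "?S' = ?A * ?S * ?B")
proof (rule eq_matI)
  fix r j assume "r < dim_row (?A * ?S * ?B)" "j < dim_col (?A * ?S * ?B)"
  hence r: "r < m + l" and j: "j < m + l" by simp_all
  let ?N = "m + l - 1" and ?R = "sylv_row m P l Q"
  have N: "{..?N} = {..<m + l}" using r by auto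
  have "?S' $$ (r, j) = hcoeff ?N (sylv_row m (psi_sharp a b d g P) l (psi_sharp a b d g Q) r) j"
    using r j by (rule sylv_forms_sylv_row)
  also have "\<dots> = (\<Sum>r'<m + l. ?A $$ (r, r') * hcoeff ?N (psi_sharp a b d g (?R r')) j)"
    unfolding sylv_row_psi_sharp[OF inv r] by (simp add: psi_sharp.hom_sum psi_sharp.hom_mult)
  also have "\<dots> = (\<Sum>r'<m + l. \<Sum>j'<m + l. ?A $$ (r, r') * ?S $$ (r', j') * ?B $$ (j', j))"
  proof (rule sum.cong[OF refl])
    fix r' assume "r' \<in> {..<m + l}"
    hence r': "r' < m + l" by simp
    have "hcoeff ?N (psi_sharp a b d g (?R r')) j
        = (\<Sum>j'\<le>?N. hcoeff ?N (?R r') j' * hcoeff ?N (psi_sharp a b d g (hmonom ?N j')) j)"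
      by (rule hcoeff_psi_sharp[OF homog_sylv_row[OF P Q r']])
    also have "\<dots> = (\<Sum>j'<m + l. ?S $$ (r', j') * ?B $$ (j', j))"
      unfolding N using r' j
      by (intro sum.cong refl) (simp add: sylv_forms_sylv_row col_change_def)
    finally show "?A $$ (r, r') * hcoeff ?N (psi_sharp a b d g (?R r')) j =
        (\<Sum>j'<m + l. ?A $$ (r, r') * ?S $$ (r', j') * ?B $$ (j', j))"
      by (simp add: sum_distrib_left mult.assoc)
  qed
  also have "\<dots> = (?A * ?S * ?B) $$ (r, j)"
    by (rule index_mult_mat3[OF row_change_carrier sylv_forms_carrier col_change_carrier r j, symmetric])
  finally show "?S' $$ (r, j) = (?A * ?S * ?B) $$ (r, j)" .
qed simp_all

lemma sylv_pphi_entry: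
  assumes "r < m + l" "j < m + l"
  shows "sylv_forms m (pphi_coeff m (p1, p2, p3) (a1, a2, a3)) l (pphi_coeff l (q1, q2, q3) (a1, a2, a3))
      $$ (r, j)
    = const2 (sylv_forms m (hcoeff m p1) l (hcoeff l q1) $$ (r, j)) * a1
    + const2 (sylv_forms m (hcoeff m p2) l (hcoeff l q2) $$ (r, j)) * a2
    + const2 (sylv_forms m (hcoeff m p3) l (hcoeff l q3) $$ (r, j)) * a3"
  using assms by (simp add: sylv_forms_def pphi_coeff_def hcoeff_def)

definition map3 :: "(bpoly \<Rightarrow> bpoly) \<Rightarrow> triple \<Rightarrow> triple" where
  "map3 f t = (case t of (x, y, z) \<Rightarrow> (f x, f y, f z))"

lemma map3_simp [simp]: "map3 f (x, y, z) = (f x, f y, f z)"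
  by (simp add: map3_def)

lemma sylv_pphi_psi_sharp:
  assumes inv: "\<And>X. psi_sharp a b d g (psi_sharp a' b' d' g' X) = X"
    and p: "homog3 m p" and q: "homog3 l q"
  shows "sylv_forms m (pphi_coeff m (map3 (psi_sharp a b d g) p) (map3 (psi_sharp a b d g) \<phi>))
      l (pphi_coeff l (map3 (psi_sharp a b d g) q) (map3 (psi_sharp a b d g) \<phi>))
    = map_mat const2 (row_change a' b' d' g' m l)
      * map_mat (psi_sharp a b d g) (sylv_forms m (pphi_coeff m p \<phi>) l (pphi_coeff l q \<phi>))
      * map_mat const2 (col_change a b d g (m + l))"
proof -
  let ?\<psi> = "psi_sharp a b d g" and ?S = "sylv_forms m (pphi_coeff m p \<phi>) l (pphi_coeff l q \<phi>)"
  let ?S' = "sylv_forms m (pphi_coeff m (map3 ?\<psi> p) (map3 ?\<psi> \<phi>)) l (pphi_coeff l (map3 ?\<psi> q) (map3 ?\<psi> \<phi>))"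
  let ?A = "map_mat const2 (row_change a' b' d' g' m l)" and ?B = "map_mat const2 (col_change a b d g (m + l))"
  obtain p1 p2 p3 q1 q2 q3 a1 a2 a3 where
    triples: "p = (p1, p2, p3)" "q = (q1, q2, q3)" "\<phi> = (a1, a2, a3)"
    by (cases p, cases q, cases \<phi>) auto
  let ?N = "m + l" and ?RC = "row_change a' b' d' g' m l" and ?CC = "col_change a b d g (m + l)"
  define S1 S2 S3 where "S1 = sylv_forms m (hcoeff m p1) l (hcoeff l q1)"
    and "S2 = sylv_forms m (hcoeff m p2) l (hcoeff l q2)"
    and "S3 = sylv_forms m (hcoeff m p3) l (hcoeff l q3)"
  have hp: "homog m p1" "homog m p2" "homog m p3" and hq: "homog l q1" "homog l q2" "homog l q3"
    using p q by (simp_all add: triples homog3_def)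
  have carriers: "?A \<in> carrier_mat ?N ?N" "map_mat ?\<psi> ?S \<in> carrier_mat ?N ?N" "?B \<in> carrier_mat ?N ?N"
    by (simp_all add: map_carrier_mat row_change_carrier sylv_forms_carrier col_change_carrier)
  have distrib: "const2 (\<Sum>r'<?N. \<Sum>j'<?N. ?RC $$ (r, r') * S $$ (r', j') * ?CC $$ (j', j)) * x
      = (\<Sum>r'<?N. \<Sum>j'<?N. const2 (?RC $$ (r, r')) * (const2 (S $$ (r', j')) * x) * const2 (?CC $$ (j', j)))"
    for S r j x by (simp add: const2.hom_sum const2.hom_mult sum_distrib_right sum_distrib_left mult_ac)
  show ?thesis
  proof (rule eq_matI)
    fix r j assume "r < dim_row (?A * map_mat ?\<psi> ?S * ?B)" "j < dim_col (?A * map_mat ?\<psi> ?S * ?B)"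
    hence r: "r < ?N" and j: "j < ?N" by simp_all
    have entry: "?\<psi> (?S $$ (r', j')) = const2 (S1 $$ (r', j')) * ?\<psi> a1
        + const2 (S2 $$ (r', j')) * ?\<psi> a2 + const2 (S3 $$ (r', j')) * ?\<psi> a3"
      if "r' < ?N" "j' < ?N" for r' j'
      using sylv_pphi_entry[OF that]
      by (simp add: triples S1_def S2_def S3_def psi_sharp.hom_add psi_sharp.hom_mult)
    have "?S' $$ (r, j) = const2 ((?RC * S1 * ?CC) $$ (r, j)) * ?\<psi> a1
        + const2 ((?RC * S2 * ?CC) $$ (r, j)) * ?\<psi> a2 + const2 ((?RC * S3 * ?CC) $$ (r, j)) * ?\<psi> a3"
      using sylv_pphi_entry[OF r j] sylv_forms_psi_sharp[OF inv hp(1) hq(1)]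
        sylv_forms_psi_sharp[OF inv hp(2) hq(2)] sylv_forms_psi_sharp[OF inv hp(3) hq(3)]
      by (simp add: triples S1_def S2_def S3_def)
    also have "\<dots> = (\<Sum>r'<?N. \<Sum>j'<?N. const2 (?RC $$ (r, r')) *
        (const2 (S1 $$ (r', j')) * ?\<psi> a1 + const2 (S2 $$ (r', j')) * ?\<psi> a2
          + const2 (S3 $$ (r', j')) * ?\<psi> a3) * const2 (?CC $$ (j', j)))"
      using r j unfolding S1_def S2_def S3_def
      by (simp only: index_mult_mat3[OF row_change_carrier sylv_forms_carrier col_change_carrier]
          distrib distrib_left distrib_right sum.distrib)
    also have "\<dots> = (\<Sum>r'<?N. \<Sum>j'<?N. ?A $$ (r, r') * map_mat ?\<psi> ?S $$ (r', j') * ?B $$ (j', j))"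
      using r j by (intro sum.cong refl) (simp add: entry)
    also have "\<dots> = (?A * map_mat ?\<psi> ?S * ?B) $$ (r, j)"
      by (rule index_mult_mat3[OF carriers r j, symmetric])
    finally show "?S' $$ (r, j) = (?A * map_mat ?\<psi> ?S * ?B) $$ (r, j)" .
  qed simp_all
qed

section \<open>Divisibility of minors\<close>

text \<open>A common divisor of all k-minors of M divides all k-minors of A * M * B (a divisibility
  form of the Cauchy-Binet formula) and is mapped to a common divisor of the k-minors of h(M)
  by a ring homomorphism h.\<close>

lemma collect_less_subset: "I \<subseteq> {..<(n::nat)} \<Longrightarrow> {i. i < n \<and> i \<in> I} = I"
  by auto

lemma pick_less: "I \<subseteq> {..<(n::nat)} \<Longrightarrow> i < card {j. j < n \<and> j \<in> I} \<Longrightarrow> pick I i < n"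
  using pick_in_set[of i I] collect_less_subset[of I n] by auto

lemma dim_submatrix_subset:
  "I \<subseteq> {..<dim_row A} \<Longrightarrow> dim_row (submatrix A I J) = card I"
  "J \<subseteq> {..<dim_col A} \<Longrightarrow> dim_col (submatrix A I J) = card J"
  "dim_row (submatrix A UNIV J) = dim_row A"
  "dim_col (submatrix A I UNIV) = dim_col A"
  by (simp_all add: dim_submatrix collect_less_subset lessThan_def)

lemma submatrix_dvd_selected_rows:
  fixes M :: "'a::comm_ring_1 mat"
  assumes M: "M \<in> carrier_mat N k" and inj: "inj_on f {0..<k}" and f: "\<And>i. i < k \<Longrightarrow> f i < N"
  shows "det (submatrix M (f ` {0..<k}) UNIV) dvd det (mat\<^sub>r k k (\<lambda>i. row M (f i)))"
proof -
  define I where "I = f ` {0..<k}"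
  have cI: "card I = k" unfolding I_def using card_image[OF inj] by simp
  have I: "I \<subseteq> {..<N}" and fI: "\<And>i. i < k \<Longrightarrow> f i \<in> I" unfolding I_def using f by auto
  text \<open>The selected row f i is row number \<pi> i of the submatrix on I.\<close>
  define \<pi> where "\<pi> i = (if i < k then card {a\<in>I. a < f i} else i)" for i
  have pick\<pi>: "i < k \<Longrightarrow> pick I (\<pi> i) = f i" for i
    unfolding \<pi>_def using pick_card_in_set[OF fI] by simp
  have \<pi>k: "i < k \<Longrightarrow> \<pi> i < k" for i
  proof -
    assume i: "i < k"
    have "{a\<in>I. a < f i} \<subset> I" using fI[OF i] by auto
    hence "card {a\<in>I. a < f i} < card I" using I by (intro psubset_card_mono) (auto intro: finite_subset)
    thus ?thesis using i cI by (simp add: \<pi>_def)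
  qed
  have "inj_on \<pi> {0..<k}"
    using inj pick\<pi> by (intro inj_onI) (metis atLeastLessThan_iff inj_on_def)
  hence perm: "\<pi> permutes {0..<k}"
    by (rule inj_on_nat_permutes) (use \<pi>k in \<open>auto simp: \<pi>_def\<close>)
  define S where "S = submatrix M I UNIV"
  have dims: "dim_row S = k" "dim_col S = k"
    using M I cI by (simp_all add: S_def dim_submatrix_subset)
  hence S: "S \<in> carrier_mat k k" by auto
  have "mat\<^sub>r k k (\<lambda>i. row M (f i)) = mat k k (\<lambda>(i, j). S $$ (\<pi> i, j))"
  proof (rule eq_matI)
    fix i j assume "i < dim_row (mat k k (\<lambda>(i, j). S $$ (\<pi> i, j)))"
      "j < dim_col (mat k k (\<lambda>(i, j). S $$ (\<pi> i, j)))"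
    hence ij: "i < k" "j < k" by auto
    have "S $$ (\<pi> i, j) = M $$ (pick I (\<pi> i), pick UNIV j)"
      unfolding S_def by (rule submatrix_index) (use dims ij \<pi>k in \<open>auto simp: S_def dim_submatrix\<close>)
    thus "mat\<^sub>r k k (\<lambda>i. row M (f i)) $$ (i, j) = mat k k (\<lambda>(i, j). S $$ (\<pi> i, j)) $$ (i, j)"
      using ij M f[OF ij(1)] by (simp add: pick\<pi> pick_UNIV)
  qed auto
  hence "det (mat\<^sub>r k k (\<lambda>i. row M (f i))) = signof \<pi> * det S"
    using det_permute_rows[OF S perm] by simp
  thus ?thesis by (simp add: S_def I_def)
qed

lemma selected_rows_dvd:
  fixes M :: "'a::comm_ring_1 mat"
  assumes M: "M \<in> carrier_mat N k"
    and minors_dvd: "\<And>I. I \<subseteq> {..<N} \<Longrightarrow> card I = k \<Longrightarrow> g dvd det (submatrix M I UNIV)"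
    and f: "\<And>i. i < k \<Longrightarrow> f i < N"
  shows "g dvd det (mat\<^sub>r k k (\<lambda>i. row M (f i)))"
proof (cases "inj_on f {0..<k}")
  case False
  then obtain i j where ij: "i \<noteq> j" "i < k" "j < k" "f i = f j"
    unfolding inj_on_def by auto
  have "det (mat\<^sub>r k k (\<lambda>i. row M (f i))) = 0"
    by (rule det_identical_rows[OF _ ij(1-3)]) (use ij in auto)
  thus ?thesis by simp
next
  case True
  have "g dvd det (submatrix M (f ` {0..<k}) UNIV)"
    using f card_image[OF True] by (intro minors_dvd) auto
  thus ?thesis using submatrix_dvd_selected_rows[OF M True f] by (rule dvd_trans)
qed

text \<open>Multilinearity of the determinant in the rows: the rows of A * M are combinations of
  the rows of M, so det (A * M) is a combination of determinants of selected rows of M.\<close>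
lemma det_mult_dvd:
  fixes A M :: "'a::comm_ring_1 mat"
  assumes A: "A \<in> carrier_mat k N" and M: "M \<in> carrier_mat N k"
    and minors_dvd: "\<And>I. I \<subseteq> {..<N} \<Longrightarrow> card I = k \<Longrightarrow> g dvd det (submatrix M I UNIV)"
  shows "g dvd det (A * M)"
proof -
  let ?F = "{f. (\<forall>i\<in>{0..<k}. f i \<in> {0..<N}) \<and> (\<forall>i. i \<notin> {0..<k} \<longrightarrow> f i = i)}"
  have "det (A * M) = (\<Sum>f\<in>?F. det (mat\<^sub>r k k (\<lambda>i. A $$ (i, f i) \<cdot>\<^sub>v row M (f i))))"
    unfolding mat_mul_finsum_alt[OF A M] by (rule det_linear_rows_sum) (use M in auto)
  also have "\<dots> = (\<Sum>f\<in>?F. prod (\<lambda>i. A $$ (i, f i)) {0..<k} * det (mat\<^sub>r k k (\<lambda>i. row M (f i))))"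
    by (intro sum.cong refl det_rows_mul) (use M in auto)
  finally show ?thesis
    using selected_rows_dvd[OF M minors_dvd] by (auto intro!: dvd_sum dvd_mult)
qed

lemma submatrix_mult:
  fixes A M :: "'a::semiring_0 mat"
  assumes A: "A \<in> carrier_mat r N" and M: "M \<in> carrier_mat N c"
    and I: "I \<subseteq> {..<r}" and J: "J \<subseteq> {..<c}"
  shows "submatrix (A * M) I J = submatrix A I UNIV * submatrix M UNIV J"
proof (rule eq_matI)
  fix i j assume "i < dim_row (submatrix A I UNIV * submatrix M UNIV J)"
    "j < dim_col (submatrix A I UNIV * submatrix M UNIV J)"
  hence i: "i < card I" and j: "j < card J"
    using A M I J by (simp_all add: dim_submatrix_subset)
  have pi: "pick I i < r" and pj: "pick J j < c"
    using pick_less[OF I] pick_less[OF J] i j by (simp_all add: collect_less_subset[OF I]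
        collect_less_subset[OF J])
  have "submatrix (A * M) I J $$ (i, j) = (A * M) $$ (pick I i, pick J j)"
    using A M I J i j by (intro submatrix_index) (simp_all add: collect_less_subset)
  also have "\<dots> = (\<Sum>l<N. A $$ (pick I i, l) * M $$ (l, pick J j))"
    using A M pi pj by (simp add: scalar_prod_def atLeast0LessThan)
  also have "\<dots> = (submatrix A I UNIV * submatrix M UNIV J) $$ (i, j)"
    using A M I J i j
    by (simp add: scalar_prod_def atLeast0LessThan dim_submatrix_subset submatrix_index
        collect_less_subset pick_UNIV dim_submatrix)
  finally show "submatrix (A * M) I J $$ (i, j) = (submatrix A I UNIV * submatrix M UNIV J) $$ (i, j)" .
qed (use A M I J in \<open>simp_all add: dim_submatrix_subset\<close>)

lemma minors_mult_left:
  fixes A M :: "'a::comm_ring_1 mat"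
  assumes A: "A \<in> carrier_mat r N" and M: "M \<in> carrier_mat N c"
    and minors_dvd: "\<And>y. y \<in> minors k M \<Longrightarrow> g dvd y"
    and x: "x \<in> minors k (A * M)"
  shows "g dvd x"
proof -
  from x obtain I J where x_eq: "x = det (submatrix (A * M) I J)"
    and I: "I \<subseteq> {..<r}" and J: "J \<subseteq> {..<c}" and cI: "card I = k" and cJ: "card J = k"
    using A M unfolding minors_def by auto
  let ?A = "submatrix A I UNIV" and ?M = "submatrix M UNIV J"
  have "g dvd det (?A * ?M)"
  proof (rule det_mult_dvd)
    show "?A \<in> carrier_mat k N" "?M \<in> carrier_mat N k"
      using carrier_matD[OF A] carrier_matD[OF M] I J cI cJ
      by (auto intro!: carrier_matI simp: dim_submatrix_subset)
    fix I' assume "I' \<subseteq> {..<N}" "card I' = k"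
    hence "det (submatrix M I' J) \<in> minors k M"
      using M J cJ unfolding minors_def by auto
    thus "g dvd det (submatrix ?M I' UNIV)"
      using minors_dvd submatrix_split[of M I' J] by simp
  qed
  thus ?thesis using x_eq submatrix_mult[OF A M I J] by simp
qed

lemma minors_transpose:
  fixes M :: "'a::comm_ring_1 mat"
  shows "minors k (transpose_mat M) = minors k M"
proof -
  have "minors k (transpose_mat M) \<subseteq> minors k M" for M :: "'a mat"
  proof
    fix x assume "x \<in> minors k (transpose_mat M)"
    then obtain I J where x_eq: "x = det (submatrix (transpose_mat M) I J)"
      and I: "I \<subseteq> {..<dim_col M}" and J: "J \<subseteq> {..<dim_row M}" and cI: "card I = k" and cJ: "card J = k"
      unfolding minors_def by auto
    have "submatrix (transpose_mat M) I J = transpose_mat (submatrix M J I)"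
      by (rule eq_matI) (use pick_less[OF I] pick_less[OF J] in \<open>auto simp: dim_submatrix submatrix_index\<close>)
    moreover have "submatrix M J I \<in> carrier_mat k k"
      using I J cI cJ by (intro carrier_matI) (simp_all add: dim_submatrix_subset)
    ultimately have "x = det (submatrix M J I)" using x_eq det_transpose by metis
    thus "x \<in> minors k M" unfolding minors_def using I J cI cJ by auto
  qed
  from this[of M] this[of "transpose_mat M"] show ?thesis by auto
qed

lemma minors_mult_both:
  fixes A M B :: "'a::comm_ring_1 mat"
  assumes A: "A \<in> carrier_mat r N" and M: "M \<in> carrier_mat N c" and B: "B \<in> carrier_mat c s"
    and minors_dvd: "\<And>y. y \<in> minors k M \<Longrightarrow> g dvd y"
    and x: "x \<in> minors k (A * M * B)"
  shows "g dvd x"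
proof -
  have AM: "A * M \<in> carrier_mat r c" using A M by auto
  have "g dvd y" if "y \<in> minors k (transpose_mat (A * M))" for y
    using minors_mult_left[OF A M minors_dvd] that by (simp add: minors_transpose)
  moreover have "x \<in> minors k (transpose_mat B * transpose_mat (A * M))"
    using x transpose_mult[OF AM B] minors_transpose[of k "A * M * B"] by simp
  ultimately show ?thesis
    using minors_mult_left[of "transpose_mat B" s c "transpose_mat (A * M)" r] AM B by auto
qed

lemma minors_map_mat:
  assumes "comm_ring_hom h"
  shows "minors k (map_mat h M) = h ` minors k M"
proof -
  have minor_map: "det (submatrix (map_mat h M) I J) = h (det (submatrix M I J))"
    if "I \<subseteq> {..<dim_row M}" "J \<subseteq> {..<dim_col M}" for I J
  proof -
    have "submatrix (map_mat h M) I J = map_mat h (submatrix M I J)"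
      by (rule eq_matI) (use pick_less[OF that(1)] pick_less[OF that(2)] in
          \<open>auto simp: dim_submatrix submatrix_index\<close>)
    thus ?thesis using comm_ring_hom.hom_det[OF assms] by metis
  qed
  show ?thesis
  proof (intro equalityI subsetI)
    fix x assume "x \<in> minors k (map_mat h M)"
    then obtain I J where x: "x = det (submatrix (map_mat h M) I J)" and IJ: "I \<subseteq> {..<dim_row M}"
      "J \<subseteq> {..<dim_col M}" "card I = k" "card J = k"
      unfolding minors_def by auto
    have "det (submatrix M I J) \<in> minors k M" unfolding minors_def using IJ by blast
    thus "x \<in> h ` minors k M" unfolding x minor_map[OF IJ(1,2)] by (rule imageI)
  next
    fix x assume "x \<in> h ` minors k M"
    then obtain I J where x: "x = h (det (submatrix M I J))" and IJ: "I \<subseteq> {..<dim_row M}"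
      "J \<subseteq> {..<dim_col M}" "card I = k" "card J = k"
      unfolding minors_def by auto
    show "x \<in> minors k (map_mat h M)"
      unfolding x minor_map[OF IJ(1,2), symmetric] minors_def using IJ by auto
  qed
qed

lemma is_gcd_of_minors_transfer:
  fixes f g :: "'a::comm_ring_1 \<Rightarrow> 'a"
  assumes f: "comm_ring_hom f" and g: "comm_ring_hom g" and fg: "\<And>x. f (g x) = x"
    and G: "is_gcd_of G (minors k S)"
    and S': "S' = A1 * map_mat f S * B1" and S: "S = A2 * map_mat g S' * B2"
    and carriers: "A1 \<in> carrier_mat N N" "B1 \<in> carrier_mat N N" "A2 \<in> carrier_mat N N"
      "B2 \<in> carrier_mat N N" "S \<in> carrier_mat N N" "S' \<in> carrier_mat N N"
  shows "is_gcd_of (f G) (minors k S')"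
proof -
  interpret f: comm_ring_hom f by fact
  interpret g: comm_ring_hom g by fact
  show ?thesis
    unfolding is_gcd_of_def
proof (intro conjI allI impI ballI)
  fix x assume x: "x \<in> minors k S'"
  show "f G dvd x"
  proof (rule minors_mult_both[OF carriers(1) _ carriers(2) _ x[unfolded S']])
    fix y assume "y \<in> minors k (map_mat f S)"
    then obtain z where "z \<in> minors k S" "y = f z" using minors_map_mat[OF f] by auto
    thus "f G dvd y" using G f.hom_dvd unfolding is_gcd_of_def by auto
  qed (use carriers in auto)
next
  fix h assume h: "\<forall>x\<in>minors k S'. h dvd x"
  have "g h dvd y" if "y \<in> minors k S" for y
  proof (rule minors_mult_both[OF carriers(3) _ carriers(4) _ that[unfolded S]])
    fix y assume "y \<in> minors k (map_mat g S')"
    then obtain z where "z \<in> minors k S'" "y = g z" using minors_map_mat[OF g] by auto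
    thus "g h dvd y" using h g.hom_dvd by auto
  qed (use carriers in auto)
  hence "f (g h) dvd f G" using G f.hom_dvd unfolding is_gcd_of_def by auto
  thus "h dvd f G" using fg by simp
qed
qed

section \<open>Transfer of mu-bases\<close>

lemma is_syz_map3:
  assumes "comm_ring_hom f" "is_syz \<phi> h"
  shows "is_syz (map3 f \<phi>) (map3 f h)"
proof -
  interpret f: comm_ring_hom f by fact
  obtain a1 a2 a3 h1 h2 h3 where triples: "\<phi> = (a1, a2, a3)" "h = (h1, h2, h3)"
    by (cases \<phi>, cases h) auto
  have "f (h1 * a1 + h2 * a2 + h3 * a3) = 0"
    using assms(2) by (simp add: is_syz_def triples)
  thus ?thesis by (simp add: is_syz_def triples f.hom_add f.hom_mult)
qed

lemma lincomb_map3: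
  assumes "comm_ring_hom f"
  shows "map3 f (lincomb r p w q) = lincomb (f r) (map3 f p) (f w) (map3 f q)"
proof -
  interpret f: comm_ring_hom f by fact
  show ?thesis by (cases p, cases q) (simp add: lincomb_def f.hom_add f.hom_mult)
qed

lemma map3_inverse: "(\<And>x. f (g x) = x) \<Longrightarrow> map3 f (map3 g t) = t"
  by (cases t) simp

lemma homog3_map3: "(\<And>P. homog m P \<Longrightarrow> homog m (f P)) \<Longrightarrow> homog3 m p \<Longrightarrow> homog3 m (map3 f p)"
  by (cases p) (simp add: homog3_def)

lemma mu_basis_transfer:
  assumes f: "comm_ring_hom f" and g: "comm_ring_hom g"
    and fg: "\<And>P. f (g P) = P" and gf: "\<And>P. g (f P) = P"
    and homog_f: "\<And>m P. homog m P \<Longrightarrow> homog m (f P)"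
    and mu: "mu_basis n \<phi> \<mu> p q"
  shows "mu_basis n (map3 f \<phi>) \<mu> (map3 f p) (map3 f q)"
proof -
  have basis: "\<exists>!rw. h = lincomb (fst rw) p (snd rw) q" if "is_syz \<phi> h" for h
    using mu that unfolding mu_basis_def by blast
  have "\<exists>!rw. h = lincomb (fst rw) (map3 f p) (snd rw) (map3 f q)" if h: "is_syz (map3 f \<phi>) h" for h
  proof -
    have "is_syz \<phi> (map3 g h)"
      using is_syz_map3[OF g h] by (simp add: map3_inverse gf)
    then obtain rw0 where rw0: "map3 g h = lincomb (fst rw0) p (snd rw0) q"
      and unique: "\<And>rw. map3 g h = lincomb (fst rw) p (snd rw) q \<Longrightarrow> rw = rw0"
      using basis by blast
    show ?thesis
    proof (rule ex1I[of _ "(f (fst rw0), f (snd rw0))"])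
      show "h = lincomb (fst (f (fst rw0), f (snd rw0))) (map3 f p) (snd (f (fst rw0), f (snd rw0))) (map3 f q)"
        using arg_cong[OF rw0, of "map3 f"] by (simp add: map3_inverse fg lincomb_map3[OF f])
    next
      fix rw assume "h = lincomb (fst rw) (map3 f p) (snd rw) (map3 f q)"
      hence "map3 g h = lincomb (g (fst rw)) p (g (snd rw)) q"
        by (simp add: lincomb_map3[OF g] map3_inverse gf)
      hence "(g (fst rw), g (snd rw)) = rw0" using unique by simp
      thus "rw = (f (fst rw0), f (snd rw0))" by (cases rw) (auto simp: fg)
    qed
  qed
  with mu show ?thesis
    unfolding mu_basis_def by (auto intro: is_syz_map3[OF f] homog3_map3 homog_f)
qed

section \<open>Singular factors under a change of coordinates\<close>

lemma singular_factors_psi_sharp: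
  assumes inv: "\<And>X. psi_sharp \<alpha>' \<beta>' \<delta>' \<gamma>' (psi_sharp \<alpha> \<beta> \<delta> \<gamma> X) = X"
    and inv': "\<And>X. psi_sharp \<alpha> \<beta> \<delta> \<gamma> (psi_sharp \<alpha>' \<beta>' \<delta>' \<gamma>' X) = X"
    and sf: "singular_factors n \<phi> d"
  shows "singular_factors n (map3 (psi_sharp \<alpha> \<beta> \<delta> \<gamma>) \<phi>) (\<lambda>i. psi_sharp \<alpha> \<beta> \<delta> \<gamma> (d i))"
proof -
  let ?\<psi> = "psi_sharp \<alpha> \<beta> \<delta> \<gamma>" and ?\<psi>' = "psi_sharp \<alpha>' \<beta>' \<delta>' \<gamma>'"
  from sf obtain \<mu> p q where mu: "mu_basis n \<phi> \<mu> p q"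
    and homog_d: "\<forall>i\<in>{1..n}. \<exists>k. homog k (d i)"
    and gcds: "\<forall>i\<in>{1..n}. is_gcd_of (\<Prod>j\<in>{i..n}. d j ^ (j - i + 1))
      (minors (n + 1 - i) (sylv_forms \<mu> (pphi_coeff \<mu> p \<phi>) (n - \<mu>) (pphi_coeff (n - \<mu>) q \<phi>)))"
    unfolding singular_factors_def by blast
  have hp: "homog3 \<mu> p" and hq: "homog3 (n - \<mu>) q" and le: "\<mu> \<le> n - \<mu>"
    using mu unfolding mu_basis_def by blast+
  let ?S = "sylv_forms \<mu> (pphi_coeff \<mu> p \<phi>) (n - \<mu>) (pphi_coeff (n - \<mu>) q \<phi>)"
  let ?S' = "sylv_forms \<mu> (pphi_coeff \<mu> (map3 ?\<psi> p) (map3 ?\<psi> \<phi>)) (n - \<mu>)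
    (pphi_coeff (n - \<mu>) (map3 ?\<psi> q) (map3 ?\<psi> \<phi>))"
  have S': "?S' = map_mat const2 (row_change \<alpha>' \<beta>' \<delta>' \<gamma>' \<mu> (n - \<mu>)) * map_mat ?\<psi> ?S
      * map_mat const2 (col_change \<alpha> \<beta> \<delta> \<gamma> (\<mu> + (n - \<mu>)))"
    by (rule sylv_pphi_psi_sharp[OF inv' hp hq])
  have hp': "homog3 \<mu> (map3 ?\<psi> p)" and hq': "homog3 (n - \<mu>) (map3 ?\<psi> q)"
    by (rule homog3_map3[OF _ hp] homog3_map3[OF _ hq], rule homog_psi_sharp, assumption)+
  have S: "?S = map_mat const2 (row_change \<alpha> \<beta> \<delta> \<gamma> \<mu> (n - \<mu>)) * map_mat ?\<psi>' ?S'
      * map_mat const2 (col_change \<alpha>' \<beta>' \<delta>' \<gamma>' (\<mu> + (n - \<mu>)))"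
    using sylv_pphi_psi_sharp[OF inv hp' hq', where \<phi> = "map3 ?\<psi> \<phi>"]
    by (simp add: map3_inverse inv)
  have "\<forall>i\<in>{1..n}. is_gcd_of (\<Prod>j\<in>{i..n}. ?\<psi> (d j) ^ (j - i + 1)) (minors (n + 1 - i) ?S')"
  proof
    fix i assume "i \<in> {1..n}"
    hence "is_gcd_of (?\<psi> (\<Prod>j\<in>{i..n}. d j ^ (j - i + 1))) (minors (n + 1 - i) ?S')"
      using gcds by (intro is_gcd_of_minors_transfer[OF psi_sharp.comm_ring_hom_axioms
          psi_sharp.comm_ring_hom_axioms inv' _ S' S])
        (auto simp: map_carrier_mat row_change_carrier col_change_carrier sylv_forms_carrier)
    thus "is_gcd_of (\<Prod>j\<in>{i..n}. ?\<psi> (d j) ^ (j - i + 1)) (minors (n + 1 - i) ?S')"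
      by (simp only: psi_sharp.hom_prod psi_sharp.hom_power)
  qed
  moreover have "mu_basis n (map3 ?\<psi> \<phi>) \<mu> (map3 ?\<psi> p) (map3 ?\<psi> q)"
    by (rule mu_basis_transfer[OF psi_sharp.comm_ring_hom_axioms psi_sharp.comm_ring_hom_axioms
          inv' inv homog_psi_sharp mu])
  moreover have "\<forall>i\<in>{1..n}. \<exists>k. homog k (?\<psi> (d i))"
    using homog_d homog_psi_sharp by blast
  ultimately show ?thesis
    unfolding singular_factors_def by blast
qed

theorem lemma3p3:
  fixes n :: nat and a b c :: bpoly and d :: "nat \<Rightarrow> bpoly"
    and \<alpha> \<beta> \<delta> \<gamma> :: complex
  assumes "n \<ge> 3"
    and "homog n a" "homog n b" "homog n c"
    and "coprime3 a b c"
    and "birational_onto_image (a, b, c)"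
    and "singular_factors n (a, b, c) d"
    and "\<alpha> * \<gamma> - \<beta> * \<delta> \<noteq> 0"
  shows "singular_factors n
           (psi_sharp \<alpha> \<beta> \<delta> \<gamma> a, psi_sharp \<alpha> \<beta> \<delta> \<gamma> b, psi_sharp \<alpha> \<beta> \<delta> \<gamma> c)
           (\<lambda>i. psi_sharp \<alpha> \<beta> \<delta> \<gamma> (d i))"
  using singular_factors_psi_sharp[OF psi_sharp_invertible[OF assms(8)] assms(7)] by simp

end
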